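(* Let $p$ be an odd prime and $m,r$ positive integers. Then $S_{mp^r}\equiv S_{mp^{r-1}}\pmod{p^{2r}}$.
   Context: $(S_n)_{n\ge0}$ is the integer sequence defined by $S_0=1$, $S_1=4$ and $(n+1)^2S_{n+1}=4(3n^2+3n+1)S_n-32n^2S_{n-1}$ for $n\ge1$; equivalently $S_n=\sum_{k=0}^n\binom nk\binom{2k}k\binom{2n-2k}{n-k}$. *)

theory Defs
  imports "HOL-Number_Theory.Number_Theory"
begin

text \<open>S_n = sum_k binom(n,k) binom(2k,k) binom(2n-2k,n-k)
  (equivalently S_0=1, S_1=4 and the stated three-term recurrence).\<close>
definition S :: "nat \<Rightarrow> int" where
  "S n = (\<Sum>k=0..n. int (n choose k) * int ((2*k) choose k) * int ((2*n - 2*k) choose (n - k)))"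

end

theory Submission
  imports Defs
begin

(* Write n = p N with p^(r-1) dvd N and split S n = sum_k S_term n k according to whether p divides k.
   Since S_term n k = (n choose k)^2 * C(k, n-k) with C an integral super Catalan number, a summand
   with v_p(k) = e is divisible by p^(2 (v_p(n) - e)); hence the summands with k prime to p vanish
   modulo p^(2r). For k = p j, the factorisation (p a)! = p^a * a! * (p a)!_p, where (M)!_p is the
   product of the i <= M prime to p, shows that S_term (p N) (p j) and S_term N j differ by a ratio
   of such p-free factorials at multiples of q = p^(e+1), where e = min (v_p(j), r - 1). For odd p,
   (q A)!_p = ((q)!_p)^A mod q^2, so this ratio is 1 modulo q^2, and S_term N j itself supplies the
   missing factor p^(2 (r - 1 - e)). *)

definition S_term :: "nat \<Rightarrow> nat \<Rightarrow> int" where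
  "S_term n k = int (n choose k) * int ((2*k) choose k) * int ((2*n - 2*k) choose (n - k))"

lemma S_eq_sum_S_term: "S n = (\<Sum>k=0..n. S_term n k)"
  by (simp add: S_def S_term_def)

lemma of_int_S_term:
  assumes "k \<le> n"
  shows "(of_int (S_term n k) :: 'a :: linordered_field)
           = fact n * fact (2*k) * fact (2*n - 2*k) / (fact k ^ 3 * fact (n - k) ^ 3)"
proof -
  have "2*n - 2*k - (n - k) = n - k" "2*k - k = k" using assms by auto
  then show ?thesis
    using assms by (simp add: S_term_def binomial_fact field_simps power3_eq_cube)
qed

(* Von Szily's recurrence for the super Catalan numbers (2a)! (2b)! / (a! b! (a+b)!), which makes
   their integrality automatic. *)
fun super_catalan :: "nat \<Rightarrow> nat \<Rightarrow> int" where
  "super_catalan a 0 = int ((2*a) choose a)"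
| "super_catalan a (Suc b) = 4 * super_catalan a b - super_catalan (Suc a) b"

lemma of_int_super_catalan:
  "(of_int (super_catalan a b) :: 'a :: linordered_field)
     = fact (2*a) * fact (2*b) / (fact a * fact b * fact (a + b))"
proof (induction b arbitrary: a)
  case 0
  then show ?case by (simp add: binomial_fact mult_2)
next
  case (Suc b)
  have "fact (2 * Suc a) = (2 * of_nat a + 2) * (2 * of_nat a + 1) * (fact (2*a) :: 'a)"
       "fact (2 * Suc b) = (2 * of_nat b + 2) * (2 * of_nat b + 1) * (fact (2*b) :: 'a)"
       "fact (Suc a) = (of_nat a + 1) * (fact a :: 'a)"
       "fact (Suc b) = (of_nat b + 1) * (fact b :: 'a)"
       "fact (Suc a + b) = (of_nat a + of_nat b + 1) * (fact (a + b) :: 'a)"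
       "fact (a + Suc b) = (of_nat a + of_nat b + 1) * (fact (a + b) :: 'a)"
    by (simp_all add: algebra_simps)
  moreover have "(of_nat a + of_nat b + 1 :: 'a) \<noteq> 0" "(of_nat a + 1 :: 'a) \<noteq> 0"
    "(of_nat b + 1 :: 'a) \<noteq> 0"
    by (simp_all add: add_nonneg_eq_0_iff)
  ultimately show ?case
    by (simp add: Suc.IH divide_simps) (simp add: algebra_simps)
qed

lemma S_term_eq_binomial_super_catalan:
  assumes "k \<le> n"
  shows "S_term n k = int (n choose k)^2 * super_catalan k (n - k)"
proof -
  have "2 * (n - k) = 2*n - 2*k" "k + (n - k) = n" using assms by auto
  then have "(of_int (S_term n k) :: real) = of_int (int (n choose k)^2 * super_catalan k (n - k))"
    using assms
    by (simp add: of_int_S_term of_int_super_catalan binomial_fact power2_eq_square power3_eq_cube)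
      (simp add: divide_simps)
  then show ?thesis by (simp only: of_int_eq_iff)
qed

lemma prime_power_dvd_binomial:
  fixes p :: nat
  assumes p: "prime p" and "p ^ R dvd n" and k: "\<not> p ^ Suc e dvd k"
  shows "p ^ (R - e) dvd (n choose k)"
proof -
  define v where "v = multiplicity p k"
  have "k \<noteq> 0" using k by (metis dvd_0_right)
  have "\<not> is_unit p" using p by auto
  then obtain k' where k': "k = p ^ v * k'" "\<not> p dvd k'"
    using multiplicity_decompose'[OF \<open>k \<noteq> 0\<close> \<open>\<not> is_unit p\<close>] unfolding v_def by blast
  have "v \<le> e" using multiplicity_lessI[OF \<open>k \<noteq> 0\<close> \<open>\<not> is_unit p\<close> k] by (simp add: v_def)
  have "p ^ (R - v) dvd (n choose k)"
  proof (cases "v \<le> R")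
    case True
    have "k * (n choose k) = n * ((n - 1) choose (k - 1))"
      using times_binomial_minus1_eq \<open>k \<noteq> 0\<close> by blast
    then have "p ^ R dvd k * (n choose k)"
      using assms(2) by (metis dvd_mult2)
    then have "p ^ v * p ^ (R - v) dvd p ^ v * (k' * (n choose k))"
      using True k'(1) by (simp add: ac_simps flip: power_add)
    then have "p ^ (R - v) dvd k' * (n choose k)"
      using p by (simp add: prime_gt_0_nat)
    moreover have "coprime (p ^ (R - v)) k'"
      using k'(2) p by (simp add: prime_imp_coprime)
    ultimately show ?thesis
      by (simp add: coprime_dvd_mult_right_iff)
  qed simp
  then show ?thesis
    using \<open>v \<le> e\<close> by (meson diff_le_mono2 dvd_trans le_imp_power_dvd)
qed

lemma prime_power_dvd_S_term:
  fixes p :: nat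
  assumes "prime p" "p ^ R dvd n" "k \<le> n" "\<not> p ^ Suc e dvd k"
  shows "int p ^ (2 * (R - e)) dvd S_term n k"
proof -
  have "int p ^ (R - e) dvd int (n choose k)"
    using prime_power_dvd_binomial[OF assms(1,2,4)] by (metis int_dvd_int_iff of_nat_power)
  then have "int p ^ (2 * (R - e)) dvd int (n choose k) ^ 2"
    by (metis dvd_power_same mult.commute power_mult)
  then show ?thesis
    by (simp add: S_term_eq_binomial_super_catalan[OF assms(3)])
qed

definition pfree_fact :: "nat \<Rightarrow> nat \<Rightarrow> int" where
  "pfree_fact p M = (\<Prod>i\<in>{i\<in>{1..M}. \<not> p dvd i}. int i)"

lemma prod_nondvd_Suc:
  "(\<Prod>i\<in>{i\<in>{1..Suc n}. \<not> p dvd i}. f i)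
     = (\<Prod>i\<in>{i\<in>{1..n}. \<not> p dvd i}. f i) * (if p dvd Suc n then 1 else f (Suc n))"
proof -
  have "{i\<in>{1..Suc n}. \<not> p dvd i}
          = (if p dvd Suc n then {i\<in>{1..n}. \<not> p dvd i} else insert (Suc n) {i\<in>{1..n}. \<not> p dvd i})"
    by (auto simp: le_Suc_eq)
  then show ?thesis by (simp add: mult.commute)
qed

lemma pfree_fact_Suc:
  "pfree_fact p (Suc n) = pfree_fact p n * (if p dvd Suc n then 1 else int (Suc n))"
  unfolding pfree_fact_def by (rule prod_nondvd_Suc)

lemma pfree_fact_add:
  assumes "p dvd M"
  shows "pfree_fact p (M + L) = pfree_fact p M * (\<Prod>i\<in>{i\<in>{1..L}. \<not> p dvd i}. int (M + i))"
proof (induction L)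
  case (Suc L)
  have "p dvd M + Suc L \<longleftrightarrow> p dvd Suc L"
    using assms dvd_add_right_iff by blast
  then have "pfree_fact p (M + Suc L) = pfree_fact p (M + L) * (if p dvd Suc L then 1 else int (M + Suc L))"
    using pfree_fact_Suc[of p "M + L"] by simp
  then show ?case
    unfolding Suc.IH prod_nondvd_Suc by (simp add: mult.assoc)
qed simp

lemma fact_eq_pfree_fact:
  assumes "p > 0"
  shows "(fact n :: int) = int p ^ (n div p) * fact (n div p) * pfree_fact p n"
proof (induction n)
  case (Suc n)
  show ?case
  proof (cases "p dvd Suc n")
    case True
    then have "Suc n div p = Suc (n div p)" by (simp add: div_Suc)
    moreover have "Suc n = p * (Suc n div p)" using True by simp
    ultimately have "int (Suc n) = int p * (1 + int (n div p))" by (metis of_nat_Suc of_nat_mult add.commute)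
    with True \<open>Suc n div p = Suc (n div p)\<close> show ?thesis
      by (simp add: Suc.IH pfree_fact_Suc algebra_simps)
  next
    case False
    then have "Suc n div p = n div p" by (simp add: div_Suc dvd_eq_mod_eq_0)
    with False show ?thesis
      by (simp add: Suc.IH pfree_fact_Suc algebra_simps)
  qed
qed (simp add: pfree_fact_def)

lemma coprime_pfree_fact:
  assumes "prime p"
  shows "coprime (int p) (pfree_fact p M)"
  unfolding pfree_fact_def
proof (rule prod_coprime_right)
  fix i assume "i \<in> {i\<in>{1..M}. \<not> p dvd i}"
  then show "coprime (int p) (int i)" using assms by (simp add: prime_imp_coprime)
qed

lemma prod_add_cong:
  fixes c :: int
  assumes "finite I"
  shows "[(\<Prod>i\<in>I. c + f i) = (\<Prod>i\<in>I. f i) + c * (\<Sum>i\<in>I. \<Prod>j\<in>I - {i}. f j)] (mod c^2)"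
  using assms
proof (induction I rule: finite_induct)
  case (insert x F)
  define P where "P = (\<Prod>j\<in>F. f j)"
  define \<Sigma> where "\<Sigma> = (\<Sum>i\<in>F. \<Prod>j\<in>F - {i}. f j)"
  have "(\<Sum>i\<in>F. \<Prod>j\<in>insert x F - {i}. f j) = f x * \<Sigma>"
    unfolding \<Sigma>_def sum_distrib_left
  proof (rule sum.cong)
    fix i assume "i \<in> F"
    then have "insert x F - {i} = insert x (F - {i})" using insert by auto
    then show "(\<Prod>j\<in>insert x F - {i}. f j) = f x * (\<Prod>j\<in>F - {i}. f j)"
      using insert by simp
  qed simp
  then have rhs: "(\<Prod>i\<in>insert x F. f i) + c * (\<Sum>i\<in>insert x F. \<Prod>j\<in>insert x F - {i}. f j)
                  = f x * P + c * (P + f x * \<Sigma>)"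
    using insert by (simp add: P_def Diff_insert_absorb)
  have "[(c + f x) * (\<Prod>i\<in>F. c + f i) = (c + f x) * (P + c * \<Sigma>)] (mod c^2)"
    using insert.IH unfolding P_def \<Sigma>_def by (rule cong_scalar_left)
  moreover have "[(c + f x) * (P + c * \<Sigma>) = f x * P + c * (P + f x * \<Sigma>)] (mod c^2)"
    by (simp add: cong_iff_dvd_diff algebra_simps power2_eq_square)
  ultimately show ?case
    using insert rhs by (simp add: cong_trans)
qed simp

lemma dvd_sum_prod_omit:
  fixes p q :: nat
  assumes p: "prime p" "odd p" and q: "q = p ^ Suc e"
  defines "I \<equiv> {i\<in>{1..q}. \<not> p dvd i}"
  shows "int q dvd (\<Sum>i\<in>I. \<Prod>j\<in>I - {i}. int j)"
proof -
  define g where "g i = (\<Prod>j\<in>I - {i}. int j)" for i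
  have "finite I" by (simp add: I_def)
  have g: "int i * g i = (\<Prod>j\<in>I. int j)" if "i \<in> I" for i
    unfolding g_def using prod.remove[OF \<open>finite I\<close> that, of int] by simp
  have "p dvd q" using q by simp
  have reflect: "q - i \<in> I \<and> i < q" if "i \<in> I" for i
  proof -
    have i: "1 \<le> i" "i \<le> q" "\<not> p dvd i" using that by (auto simp: I_def)
    then have "i < q" using \<open>p dvd q\<close> by (metis le_neq_implies_less)
    moreover have "\<not> p dvd q - i"
      using i \<open>p dvd q\<close> \<open>i < q\<close> by (metis diff_diff_cancel dvd_diff_nat less_imp_le_nat)
    ultimately show ?thesis by (auto simp: I_def)
  qed
  have coprime: "coprime (int q) (int i)" if "i \<in> I" for i
    using that p q by (simp add: I_def prime_imp_coprime)
  (* Pair i with q - i: then i * (g i + g (q - i)) = q * g (q - i), and q is odd. *)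
  have pair: "int q dvd g i + g (q - i)" if "i \<in> I" for i
  proof -
    have "int (q - i) * g (q - i) = int i * g i"
      using g[OF that] g[of "q - i"] reflect[OF that] by argo
    then have "(int q - int i) * g (q - i) = int i * g i"
      using reflect[OF that] by (simp add: of_nat_diff)
    then have "int i * (g i + g (q - i)) = int q * g (q - i)"
      by (simp add: algebra_simps)
    then show ?thesis
      using coprime[OF that] by (metis coprime_dvd_mult_right_iff dvd_triv_left)
  qed
  have "(\<Sum>i\<in>I. g i) = (\<Sum>i\<in>I. g (q - i))"
    by (rule sum.reindex_bij_witness[of I "\<lambda>i. q - i" "\<lambda>i. q - i"])
      (use reflect in \<open>auto simp: less_imp_le_nat\<close>)
  then have "2 * (\<Sum>i\<in>I. g i) = (\<Sum>i\<in>I. g i + g (q - i))"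
    by (simp add: sum.distrib)
  also have "int q dvd \<dots>" using pair by (simp add: dvd_sum)
  finally have "int q dvd 2 * (\<Sum>i\<in>I. g i)" .
  moreover have "coprime q 2"
    using p q by (simp add: coprime_commute)
  then have "coprime (int q) 2"
    by (metis coprime_int_iff of_nat_numeral)
  ultimately show ?thesis
    by (simp add: g_def coprime_dvd_mult_right_iff)
qed

lemma pfree_fact_mult_cong:
  assumes p: "prime p" "odd p" and q: "q = p ^ Suc e"
  shows "[pfree_fact p (q * A) = pfree_fact p q ^ A] (mod int q ^ 2)"
proof (induction A)
  case (Suc A)
  define I where "I = {i\<in>{1..q}. \<not> p dvd i}"
  have "p dvd q * A" using q by simp
  then have split: "pfree_fact p (q * Suc A) = pfree_fact p (q * A) * (\<Prod>i\<in>I. int (q * A) + int i)"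
    using pfree_fact_add[of p "q * A" q] by (simp add: I_def add.commute)
  obtain w where w: "(\<Sum>i\<in>I. \<Prod>j\<in>I - {i}. int j) = int q * w"
    using dvd_sum_prod_omit[OF p q] unfolding I_def by blast
  have "finite I" "pfree_fact p q = (\<Prod>i\<in>I. int i)"
    by (simp_all add: I_def pfree_fact_def)
  moreover have "int (q * A) * (int q * w) = int q ^ 2 * (int A * w)"
    by (simp add: power2_eq_square)
  ultimately have "[(\<Prod>i\<in>I. int (q * A) + int i) = pfree_fact p q + int q ^ 2 * (int A * w)] (mod int (q * A) ^ 2)"
    using prod_add_cong[of I "int (q * A)" int] w by metis
  then have "[(\<Prod>i\<in>I. int (q * A) + int i) = pfree_fact p q + int q ^ 2 * (int A * w)] (mod int q ^ 2)"
    by (rule cong_dvd_modulus) (simp add: power_mult_distrib)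
  moreover have "[pfree_fact p q + int q ^ 2 * (int A * w) = pfree_fact p q] (mod int q ^ 2)"
    by (simp add: cong_iff_dvd_diff)
  ultimately have "[(\<Prod>i\<in>I. int (q * A) + int i) = pfree_fact p q] (mod int q ^ 2)"
    by (rule cong_trans)
  with Suc.IH have "[pfree_fact p (q * A) * (\<Prod>i\<in>I. int (q * A) + int i) = pfree_fact p q ^ A * pfree_fact p q] (mod int q ^ 2)"
    by (rule cong_mult)
  then show ?case
    unfolding split power_Suc by (simp only: mult.commute)
qed (simp add: pfree_fact_def)

lemma pfree_fact_cube_cong:
  assumes "prime p" "odd p" "q = p ^ Suc e"
  shows "[pfree_fact p (q * J) ^ 3 * pfree_fact p (q * K) ^ 3
          = pfree_fact p (q * (J + K)) * pfree_fact p (q * (2 * J)) * pfree_fact p (q * (2 * K))]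
           (mod int q ^ 2)"
proof -
  define V where "V = pfree_fact p q"
  have "[pfree_fact p (q * J) ^ 3 * pfree_fact p (q * K) ^ 3 = (V ^ J) ^ 3 * (V ^ K) ^ 3] (mod int q ^ 2)"
    unfolding V_def by (intro cong_mult cong_pow pfree_fact_mult_cong[OF assms])
  also have "(V ^ J) ^ 3 * (V ^ K) ^ 3 = V ^ (J + K) * V ^ (2 * J) * V ^ (2 * K)"
    by (simp flip: power_add power_mult) (simp add: algebra_simps)
  also have "[\<dots> = pfree_fact p (q * (J + K)) * pfree_fact p (q * (2 * J)) * pfree_fact p (q * (2 * K))]
               (mod int q ^ 2)"
    unfolding V_def by (intro cong_mult cong_sym[OF pfree_fact_mult_cong[OF assms]])
  finally show ?thesis .
qed

lemma S_term_mult_fact: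
  assumes "k \<le> n"
  shows "S_term n k * (fact k ^ 3 * fact (n - k) ^ 3) = fact n * fact (2*k) * fact (2*n - 2*k)"
proof -
  have "(of_int (S_term n k * (fact k ^ 3 * fact (n - k) ^ 3)) :: real)
          = of_int (fact n * fact (2*k) * fact (2*n - 2*k))"
    using assms by (simp add: of_int_S_term)
  then show ?thesis by (simp only: of_int_eq_iff)
qed

lemma S_term_mult_prime:
  assumes "p > 0" "j \<le> N"
  shows "S_term (p * N) (p * j) * (pfree_fact p (p * j) ^ 3 * pfree_fact p (p * (N - j)) ^ 3)
       = S_term N j * (pfree_fact p (p * N) * pfree_fact p (p * (2 * j)) * pfree_fact p (p * (2 * N - 2 * j)))"
proof -
  have fact_mult: "(fact (p * a) :: int) = int p ^ a * fact a * pfree_fact p (p * a)" for a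
    using fact_eq_pfree_fact[OF assms(1), of "p * a"] assms(1) by simp
  have "p * N - p * j = p * (N - j)" "2 * (p * j) = p * (2 * j)" "2 * (p * N) - 2 * (p * j) = p * (2 * N - 2 * j)"
    by (simp_all add: diff_mult_distrib2)
  then have scaled: "S_term (p * N) (p * j) * (fact (p * j) ^ 3 * fact (p * (N - j)) ^ 3)
                      = fact (p * N) * fact (p * (2 * j)) * fact (p * (2 * N - 2 * j))"
    using S_term_mult_fact[of "p * j" "p * N"] assms(2) by (simp add: mult.left_commute)
  have powers: "int p ^ N * int p ^ (2 * j) * int p ^ (2 * N - 2 * j) = (int p ^ j) ^ 3 * (int p ^ (N - j)) ^ 3"
    using assms(2) by (simp flip: power_add power_mult) (simp add: algebra_simps)
  define Q :: int where "Q = (int p ^ j) ^ 3 * (int p ^ (N - j)) ^ 3 * (fact j ^ 3 * fact (N - j) ^ 3)"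
  have "S_term (p * N) (p * j) * (pfree_fact p (p * j) ^ 3 * pfree_fact p (p * (N - j)) ^ 3) * Q
          = S_term (p * N) (p * j) * (fact (p * j) ^ 3 * fact (p * (N - j)) ^ 3)"
    unfolding Q_def fact_mult by (simp add: power_mult_distrib mult_ac)
  also have "\<dots> = (int p ^ N * int p ^ (2 * j) * int p ^ (2 * N - 2 * j))
                    * (fact N * fact (2 * j) * fact (2 * N - 2 * j))
                    * (pfree_fact p (p * N) * pfree_fact p (p * (2 * j)) * pfree_fact p (p * (2 * N - 2 * j)))"
    unfolding scaled by (simp only: fact_mult) (simp add: mult_ac)
  also have "\<dots> = S_term N j * (pfree_fact p (p * N) * pfree_fact p (p * (2 * j)) * pfree_fact p (p * (2 * N - 2 * j))) * Q"
    unfolding powers S_term_mult_fact[OF assms(2), symmetric] Q_def by (simp add: mult_ac)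
  finally show ?thesis
    using assms(1) by (simp add: Q_def)
qed

lemma S_term_valuation_tradeoff:
  fixes p :: nat
  assumes "prime p" "p ^ R dvd N" "j \<le> N"
  obtains e where "e \<le> R" "p ^ e dvd j" "p ^ e dvd N - j" "int p ^ (2 * (R - e)) dvd S_term N j"
proof (cases "p ^ R dvd j")
  case True
  then show ?thesis
    using that[of R] assms(2) by (simp add: dvd_diff_nat)
next
  case False
  define e where "e = multiplicity p j"
  have j: "j \<noteq> 0" using False by (metis dvd_0_right)
  have p: "\<not> is_unit p" using assms(1) by auto
  have "e < R" "\<not> p ^ Suc e dvd j"
    using multiplicity_lessI[OF j p False] power_dvd_iff_le_multiplicity[OF j p, of "Suc e"]
    by (simp_all add: e_def)
  moreover have "p ^ e dvd j"
    by (simp add: e_def multiplicity_dvd)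
  moreover have "p ^ e dvd N"
    using \<open>e < R\<close> assms(2) by (meson dvd_trans le_imp_power_dvd less_imp_le_nat)
  ultimately show ?thesis
    using that[of e] prime_power_dvd_S_term[OF assms] by (simp add: dvd_diff_nat)
qed

lemma S_term_mult_prime_cong:
  fixes p :: nat
  assumes p: "prime p" "odd p" and "r > 0" "p ^ (r - 1) dvd N" "j \<le> N"
  shows "[S_term (p * N) (p * j) = S_term N j] (mod int p ^ (2 * r))"
proof -
  obtain e where e: "e \<le> r - 1" "p ^ e dvd j" "p ^ e dvd N - j"
    and dvd_term: "int p ^ (2 * (r - 1 - e)) dvd S_term N j"
    using S_term_valuation_tradeoff[OF p(1) assms(4,5)] .
  define q where "q = p ^ Suc e"
  obtain J K where JK: "j = p ^ e * J" "N - j = p ^ e * K"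
    using e(2,3) by (auto elim!: dvdE)
  moreover have "N = p ^ e * (J + K)"
    using JK assms(5) by (metis add_mult_distrib2 le_add_diff_inverse)
  moreover have "2 * N - 2 * j = 2 * (N - j)"
    by simp
  ultimately have idx: "p * N = q * (J + K)" "p * j = q * J" "p * (N - j) = q * K"
    "p * (2 * j) = q * (2 * J)" "p * (2 * N - 2 * j) = q * (2 * K)"
    unfolding q_def by (simp_all only:) (simp_all add: mult_ac)
  define A where "A = pfree_fact p (p * j) ^ 3 * pfree_fact p (p * (N - j)) ^ 3"
  define B where "B = pfree_fact p (p * N) * pfree_fact p (p * (2 * j)) * pfree_fact p (p * (2 * N - 2 * j))"
  have "[A = B] (mod int q ^ 2)"
    unfolding A_def B_def idx using p q_def by (rule pfree_fact_cube_cong)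
  then have "int q ^ 2 dvd B - A"
    using cong_iff_dvd_diff cong_sym by blast
  then have "int p ^ (2 * (r - 1 - e)) * int q ^ 2 dvd S_term N j * (B - A)"
    using dvd_term by (rule mult_dvd_mono[rotated])
  moreover have "int p ^ (2 * (r - 1 - e)) * int q ^ 2 = int p ^ (2 * r)"
  proof -
    have "2 * r = 2 * (r - 1 - e) + Suc e * 2" using e(1) \<open>r > 0\<close> by simp
    then show ?thesis by (simp add: q_def power_mult power_add power_mult_distrib power2_eq_square)
  qed
  moreover have "S_term N j * (B - A) = (S_term (p * N) (p * j) - S_term N j) * A"
    using S_term_mult_prime[OF prime_gt_0_nat[OF p(1)] assms(5)] by (simp add: A_def B_def algebra_simps)
  moreover have "coprime (int p ^ (2 * r)) A"
    using coprime_pfree_fact[OF p(1)] by (simp add: A_def)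
  ultimately show ?thesis
    by (simp add: cong_iff_dvd_diff coprime_dvd_mult_left_iff)
qed

lemma sum_split_multiples:
  fixes f :: "nat \<Rightarrow> 'a :: comm_monoid_add"
  assumes "p > 0"
  shows "(\<Sum>k=0..p * N. f k) = (\<Sum>j=0..N. f (p * j)) + (\<Sum>k\<in>{k\<in>{0..p * N}. \<not> p dvd k}. f k)"
proof -
  have "(\<Sum>k=0..p * N. f k) = (\<Sum>k\<in>{0..p * N} \<inter> {k. p dvd k}. f k) + (\<Sum>k\<in>{0..p * N} - {k. p dvd k}. f k)"
    by (rule sum.Int_Diff) simp
  also have "{0..p * N} \<inter> {k. p dvd k} = (\<lambda>j. p * j) ` {0..N}"
    using assms by (auto elim!: dvdE)
  also have "{0..p * N} - {k. p dvd k} = {k\<in>{0..p * N}. \<not> p dvd k}"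
    by auto
  finally show ?thesis
    using assms by (simp add: sum.reindex inj_on_def)
qed

theorem mainTheorem3:
  fixes p m r :: nat
  assumes "prime p" and "odd p" and "m > 0" and "r > 0"
  shows "[S (m * p ^ r) = S (m * p ^ (r - 1))] (mod (int p) ^ (2 * r))"
proof -
  define N where "N = m * p ^ (r - 1)"
  have n: "m * p ^ r = p * N"
    using \<open>r > 0\<close> by (simp add: N_def power_eq_if)
  have "[(\<Sum>k\<in>{k\<in>{0..p * N}. \<not> p dvd k}. S_term (p * N) k) = 0] (mod int p ^ (2 * r))"
  proof -
    have "p ^ r dvd p * N" using n by (metis dvd_triv_right)
    then have "int p ^ (2 * r) dvd S_term (p * N) k" if "k \<in> {k\<in>{0..p * N}. \<not> p dvd k}" for k
      using prime_power_dvd_S_term[OF \<open>prime p\<close>, of r "p * N" k 0] that by simp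
    then show ?thesis
      unfolding cong_0_iff by (rule dvd_sum)
  qed
  moreover have "[(\<Sum>j=0..N. S_term (p * N) (p * j)) = (\<Sum>j=0..N. S_term N j)] (mod int p ^ (2 * r))"
    by (rule cong_sum) (simp add: S_term_mult_prime_cong[OF assms(1,2,4)] N_def)
  ultimately have "[(\<Sum>j=0..N. S_term (p * N) (p * j)) + (\<Sum>k\<in>{k\<in>{0..p * N}. \<not> p dvd k}. S_term (p * N) k)
                    = (\<Sum>j=0..N. S_term N j) + 0] (mod int p ^ (2 * r))"
    by (intro cong_add)
  then show ?thesis
    using sum_split_multiples[OF prime_gt_0_nat[OF \<open>prime p\<close>], of "S_term (p * N)" N]
    unfolding n S_eq_sum_S_term N_def[symmetric] by simp
qed

end
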